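(* Assume Assumption 1 and that $\|f(x,w)\|\le K(\|x\|+\|w\|)$ for some $K>0$ and all $x,w$, and that $\int\|z\|^2\nu_w(dz)<\infty$ where $\nu_w$ is the law of $w_t$. Suppose $(\pi_n,Q_n)\to(\pi,Q)$ in $\mathcal S\times\mathcal Q_c$ and $\{\pi_n\}$ satisfies $\lim_{L\to\infty}\sup_n\int_{\{\|x\|^2\ge L\}}\|x\|^2\pi_n(dx)=0$. If $m$ is such that $\pi(Q^{-1}(m))>0$, then (for all $n$ large enough that $\pi_n(Q_n^{-1}(m))>0$) the sequence $\{\hat\pi(m,\pi_n,Q_n)\}$ satisfies the same uniform integrability condition: $$\lim_{L\to\infty}\sup_n\int_{\{\|z\|^2\ge L\}}\|z\|^2\,\hat\pi(m,\pi_n,Q_n)(dz)=0.$$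
   Context: Assumption 1: the source is $x_{t+1}=f(x_t,w_t)$ with $f:\mathbb R^d\times\mathbb R^d\to\mathbb R^d$ Borel, $\{w_t\}$ i.i.d. and independent of $x_0$; for each $x$ the law of $f(x,w_0)$ has a density $\phi(\cdot|x)$ which is strictly positive everywhere, bounded by $C$ and $C_1$-Lipschitz, uniformly in $x$. $\mathcal S$: probability measures on $\mathbb R^d$ with density bounded by $C$ and $C_1$-Lipschitz (weak topology). $\mathcal Q_c$: Borel maps $Q:\mathbb R^d\to\{1,\dots,M\}$ with all cells convex, topologized by: fix $P$ with strictly positive density, identify $Q,Q'$ if $PQ=PQ'$, and $Q_n\to Q$ iff $PQ_n\to PQ$ weakly, where $PQ(A\times\{i\})=P(A\cap Q^{-1}(i))$. For $\pi(Q^{-1}(m))>0$, $\hat\pi(m,\pi,Q)$ is the law of $f(x,w)$ where $x\sim\pi(\cdot\mid Q^{-1}(m))$ and $w\sim\nu_w$ independent, i.e. it has density $z\mapsto\pi(Q^{-1}(m))^{-1}\int_{Q^{-1}(m)}\phi(z|x)\pi(dx)$. *)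

theory Defs
  imports "HOL-Probability.Probability"
begin

definition weak_conv_to :: "(nat \<Rightarrow> 'a::topological_space measure) \<Rightarrow> 'a measure \<Rightarrow> bool" where
  "weak_conv_to Ms M \<longleftrightarrow>
     (\<forall>g::'a \<Rightarrow> real. continuous_on UNIV g \<and> bounded (range g) \<longrightarrow>
        (\<lambda>n. \<integral>x. g x \<partial>Ms n) \<longlonglongrightarrow> (\<integral>x. g x \<partial>M))"

definition S_class :: "real \<Rightarrow> real \<Rightarrow> 'a::euclidean_space measure set" where
  "S_class C C1 = {\<pi>. prob_space \<pi> \<and>
     (\<exists>g. g \<in> borel_measurable borel \<and> (\<forall>x. 0 \<le> g x \<and> g x \<le> C) \<and>
          C1-lipschitz_on UNIV g \<and> \<pi> = density lborel (\<lambda>x. ennreal (g x)))}"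

definition Qc_class :: "nat \<Rightarrow> ('a::euclidean_space \<Rightarrow> nat) set" where
  "Qc_class M = {Q. Q \<in> measurable borel (count_space UNIV) \<and> (\<forall>x. Q x \<in> {1..M}) \<and>
                    (\<forall>i. convex (Q -` {i}))}"

text \<open>The joint measure PQ on R^d x {1..M}: PQ(A x {i}) = P(A \<inter> Q^{-1}(i)).\<close>
definition joint_meas :: "'a::euclidean_space measure \<Rightarrow> ('a \<Rightarrow> nat) \<Rightarrow> ('a \<times> nat) measure" where
  "joint_meas P Q = distr P borel (\<lambda>x. (x, Q x))"

definition Qc_conv :: "'a::euclidean_space measure \<Rightarrow> (nat \<Rightarrow> 'a \<Rightarrow> nat) \<Rightarrow> ('a \<Rightarrow> nat) \<Rightarrow> bool" where
  "Qc_conv P Qs Q \<longleftrightarrow> weak_conv_to (\<lambda>n. joint_meas P (Qs n)) (joint_meas P Q)"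

text \<open>hat pi(m, pi, Q): law of f(x,w) with x ~ pi( . | Q^{-1}(m)) and w ~ nu independent.\<close>
definition pihat :: "('a::euclidean_space \<Rightarrow> 'a \<Rightarrow> 'a) \<Rightarrow> 'a measure \<Rightarrow> nat \<Rightarrow> 'a measure \<Rightarrow> ('a \<Rightarrow> nat) \<Rightarrow> 'a measure" where
  "pihat f \<nu> m \<pi> Q = distr (uniform_measure \<pi> (Q -` {m}) \<Otimes>\<^sub>M \<nu>) borel (\<lambda>(x, w). f x w)"

definition tail2 :: "'a::euclidean_space measure \<Rightarrow> real \<Rightarrow> ennreal" where
  "tail2 M L = (\<integral>\<^sup>+ z. indicator {z. L \<le> norm z ^ 2} z * ennreal (norm z ^ 2) \<partial>M)"

end

theory Submission
  imports Defs
begin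

text \<open>
  The growth bound gives \<open>\<parallel>f x w\<parallel>\<^sup>2 \<le> 2 K\<^sup>2 (\<parallel>x\<parallel>\<^sup>2 + \<parallel>w\<parallel>\<^sup>2)\<close>, so the tail of
  \<open>pihat f \<nu> m (\<pi>s n) (Qs n)\<close> at level \<open>L\<close> is at most \<open>4 K\<^sup>2\<close> times the tails at level
  \<open>L / (4 K\<^sup>2)\<close> of \<open>\<pi>s n\<close> conditioned on the cell \<open>Qs n -` {m}\<close> and of \<open>\<nu>\<close>. The tail of
  \<open>\<nu>\<close> vanishes by the moment assumption, and the conditional tail is at most the tail of
  \<open>\<pi>s n\<close> divided by the mass of the cell; so everything reduces to a uniform lower bound
  on the cell masses.

  For that bound, the Lipschitz density of \<open>\<pi>\<close> is bounded below on a small ball meeting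
  the cell \<open>Q -` {m}\<close> in positive Lebesgue measure. Weak convergence together with the
  uniform Lipschitz constant transfers the lower bound to the densities of \<open>\<pi>s n\<close>, and
  testing the weak convergence of the joint measures against a tent function on the ball
  times the indicator of \<open>m\<close> shows that the cells \<open>Qs n -` {m}\<close> eventually meet the ball in
  Lebesgue measure bounded away from zero.
\<close>

section \<open>Tails of second moments\<close>

lemma indicator_tail_le_sum:
  fixes a b s c L :: real
  assumes c: "0 < c" and a: "0 \<le> a" and b: "0 \<le> b" and s: "2 * s \<le> c * (a + b)"
  shows "indicator {z. L \<le> z} s * s
           \<le> c * (indicator {z. L / c \<le> z} a * a + indicator {z. L / c \<le> z} b * b)"
proof (cases "L \<le> s")
  case True
  have "s \<le> c * max a b"
    using s c mult_left_mono[of "a + b" "2 * max a b" c] by linarith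
  then have "L / c \<le> max a b" using True c by (simp add: field_simps)
  then show ?thesis
    using True \<open>s \<le> c * max a b\<close> a b c
    by (cases "b \<le> a") (simp_all add: max_def indicator_def algebra_simps,
        (smt (verit) mult_nonneg_nonneg)+)
qed (use a b c in \<open>auto simp: indicator_def\<close>)

lemma tail2_distr_prod_le:
  fixes f :: "'a::euclidean_space \<Rightarrow> 'a \<Rightarrow> 'a" and U \<nu> :: "'a measure"
  assumes f_meas: "(\<lambda>(x, w). f x w) \<in> borel_measurable borel"
    and U: "prob_space U" "sets U = sets borel" and \<nu>: "prob_space \<nu>" "sets \<nu> = sets borel"
    and K: "K > 0" and growth: "\<And>x w. norm (f x w) \<le> K * (norm x + norm w)"
  shows "tail2 (distr (U \<Otimes>\<^sub>M \<nu>) borel (\<lambda>(x, w). f x w)) L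
           \<le> ennreal (4 * K\<^sup>2) * (tail2 U (L / (4 * K\<^sup>2)) + tail2 \<nu> (L / (4 * K\<^sup>2)))"
proof -
  interpret U: prob_space U by (rule U(1))
  interpret \<nu>: prob_space \<nu> by (rule \<nu>(1))
  define c where "c = 4 * K\<^sup>2"
  define a where "a x = indicator {z. L / c \<le> z} (norm x ^ 2) * norm x ^ 2" for x :: 'a
  have sets_prod: "sets (U \<Otimes>\<^sub>M \<nu>) = sets (borel :: ('a \<times> 'a) measure)"
    using sets_pair_measure_cong[OF U(2) \<nu>(2)] borel_prod by metis
  have [measurable]: "(\<lambda>(x, w). f x w) \<in> borel_measurable (U \<Otimes>\<^sub>M \<nu>)"
    using f_meas measurable_cong_sets[OF sets_prod refl] by blast
  have a_U[measurable]: "a \<in> borel_measurable U" and a_\<nu>[measurable]: "a \<in> borel_measurable \<nu>"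
    unfolding a_def measurable_cong_sets[OF U(2) refl] measurable_cong_sets[OF \<nu>(2) refl]
    by measurable
  have a_nonneg: "0 \<le> a x" for x by (simp add: a_def)
  have "tail2 (distr (U \<Otimes>\<^sub>M \<nu>) borel (\<lambda>(x, w). f x w)) L
      = (\<integral>\<^sup>+ z. ennreal (indicator {t. L \<le> t} (norm (f (fst z) (snd z)) ^ 2)
                             * norm (f (fst z) (snd z)) ^ 2) \<partial>(U \<Otimes>\<^sub>M \<nu>))"
    unfolding tail2_def
    by (subst nn_integral_distr) (auto simp: indicator_def split: prod.splits intro!: nn_integral_cong)
  also have "\<dots> \<le> (\<integral>\<^sup>+ z. ennreal (c * (a (fst z) + a (snd z))) \<partial>(U \<Otimes>\<^sub>M \<nu>))"
  proof (intro nn_integral_mono ennreal_leI)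
    fix z :: "'a \<times> 'a"
    define x y where "x = norm (fst z)" and "y = norm (snd z)"
    have "norm (f (fst z) (snd z)) ^ 2 \<le> (K * (x + y))\<^sup>2"
      unfolding x_def y_def using growth[of "fst z" "snd z"] by (intro power_mono) auto
    also have "\<dots> \<le> 2 * K\<^sup>2 * (x\<^sup>2 + y\<^sup>2)"
      using K mult_left_mono[of "(x + y)\<^sup>2" "2 * (x\<^sup>2 + y\<^sup>2)" "K\<^sup>2"]
      by (simp add: power_mult_distrib) (smt (verit) power2_diff power2_sum zero_le_power2)
    finally show "indicator {t. L \<le> t} (norm (f (fst z) (snd z)) ^ 2) * norm (f (fst z) (snd z)) ^ 2
                    \<le> c * (a (fst z) + a (snd z))"
      unfolding a_def x_def y_def c_def using K by (intro indicator_tail_le_sum) auto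
  qed
  also have "\<dots> = ennreal c * ((\<integral>\<^sup>+ z. a (fst z) \<partial>(U \<Otimes>\<^sub>M \<nu>))
                                 + (\<integral>\<^sup>+ z. a (snd z) \<partial>(U \<Otimes>\<^sub>M \<nu>)))"
    using a_nonneg K by (simp add: c_def ennreal_mult nn_integral_cmult nn_integral_add)
  also have "(\<integral>\<^sup>+ z. a (fst z) \<partial>(U \<Otimes>\<^sub>M \<nu>)) = (\<integral>\<^sup>+ x. a x \<partial>U)"
    by (subst \<nu>.nn_integral_fst[symmetric]) (simp_all add: \<nu>.emeasure_space_1)
  also have "(\<integral>\<^sup>+ z. a (snd z) \<partial>(U \<Otimes>\<^sub>M \<nu>)) = (\<integral>\<^sup>+ w. a w \<partial>\<nu>)"
    by (subst \<nu>.nn_integral_fst[symmetric]) (simp_all add: U.emeasure_space_1)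
  also have "(\<lambda>x. ennreal (a x)) = (\<lambda>z. indicator {z. L / c \<le> norm z ^ 2} z * ennreal (norm z ^ 2))"
    by (auto simp: a_def indicator_def)
  finally show ?thesis unfolding tail2_def c_def .
qed

lemma tail2_uniform_measure_le:
  fixes M :: "'a::euclidean_space measure"
  assumes M: "prob_space M" "sets M = sets borel" and A: "A \<in> sets borel"
    and c: "0 < c" "c \<le> measure M A"
  shows "tail2 (uniform_measure M A) L \<le> ennreal (1 / c) * tail2 M L"
proof -
  interpret prob_space M by (rule M(1))
  have [measurable]: "A \<in> sets M" using A M(2) by simp
  have "tail2 (uniform_measure M A) L
      = (\<integral>\<^sup>+ z. indicator {z. L \<le> norm z ^ 2} z * ennreal (norm z ^ 2) * indicator A z \<partial>M)
          / emeasure M A"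
    unfolding tail2_def
    by (rule nn_integral_uniform_measure) (simp_all add: measurable_cong_sets[OF M(2) refl])
  also have "\<dots> \<le> tail2 M L / ennreal (measure M A)"
    unfolding tail2_def emeasure_eq_measure
    by (intro divide_right_mono_ennreal nn_integral_mono) (auto simp: indicator_def)
  also have "\<dots> = ennreal (1 / measure M A) * tail2 M L"
    using c by (simp add: divide_ennreal_def inverse_ennreal inverse_eq_divide mult.commute)
  also have "\<dots> \<le> ennreal (1 / c) * tail2 M L"
    using c by (intro mult_right_mono ennreal_leI) (auto simp: field_simps)
  finally show ?thesis .
qed

lemma tail2_tendsto_zero:
  fixes \<nu> :: "'a::euclidean_space measure"
  assumes sets: "sets \<nu> = sets borel"
    and moment: "(\<integral>\<^sup>+ z. ennreal (norm z ^ 2) \<partial>\<nu>) < \<infinity>"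
  shows "(tail2 \<nu> \<longlongrightarrow> 0) at_top"
proof -
  define s where "s L = (\<lambda>z::'a. indicator {z. L \<le> norm z ^ 2} z * norm z ^ 2)" for L :: real
  have [measurable]: "(\<lambda>z::'a. norm z ^ 2) \<in> borel_measurable \<nu>" "s L \<in> borel_measurable \<nu>" for L
    unfolding s_def measurable_cong_sets[OF sets refl] by measurable
  have int: "integrable \<nu> (\<lambda>z. norm z ^ 2)"
    using moment by (intro integrableI_bounded) auto
  have "((\<lambda>L. integral\<^sup>L \<nu> (s L)) \<longlongrightarrow> integral\<^sup>L \<nu> (\<lambda>_. 0::real)) at_top"
  proof (rule integral_dominated_convergence_at_top[OF _ _ int])
    show "AE z in \<nu>. ((\<lambda>L. s L z) \<longlongrightarrow> 0) at_top"
    proof (intro AE_I2 tendsto_eventually)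
      fix z :: 'a
      show "\<forall>\<^sub>F L in at_top. s L z = 0"
        using eventually_gt_at_top[of "norm z ^ 2"] by eventually_elim (simp add: s_def)
    qed
    show "\<forall>\<^sub>F L in at_top. AE z in \<nu>. norm (s L z) \<le> norm z ^ 2"
      by (intro always_eventually allI AE_I2) (simp add: s_def indicator_def)
  qed simp_all
  then have "((\<lambda>L. ennreal (integral\<^sup>L \<nu> (s L))) \<longlongrightarrow> 0) at_top"
    using tendsto_ennrealI by fastforce
  moreover have "tail2 \<nu> = (\<lambda>L. ennreal (integral\<^sup>L \<nu> (s L)))"
  proof
    fix L
    have "integrable \<nu> (s L)"
      using int by (rule Bochner_Integration.integrable_bound)
        (auto simp: s_def indicator_def intro!: AE_I2)
    then have "(\<integral>\<^sup>+ z. ennreal (s L z) \<partial>\<nu>) = ennreal (integral\<^sup>L \<nu> (s L))"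
      by (intro nn_integral_eq_integral) (auto simp: s_def)
    moreover have "tail2 \<nu> L = (\<integral>\<^sup>+ z. ennreal (s L z) \<partial>\<nu>)"
      unfolding tail2_def s_def by (intro nn_integral_cong) (simp add: indicator_def)
    ultimately show "tail2 \<nu> L = ennreal (integral\<^sup>L \<nu> (s L))" by simp
  qed
  ultimately show ?thesis by simp
qed

lemma tendsto_rescaled_tails_zero:
  fixes S T :: "real \<Rightarrow> ennreal"
  assumes S: "(S \<longlongrightarrow> 0) at_top" and T: "(T \<longlongrightarrow> 0) at_top" and a: "0 < a"
  shows "((\<lambda>L. ennreal b * (ennreal e * S (L / a) + T (L / a))) \<longlongrightarrow> 0) at_top"
proof -
  have "filterlim (\<lambda>L. L * inverse a) at_top at_top"
    using a by (intro filterlim_at_top_mult_tendsto_pos[OF tendsto_const] filterlim_ident) auto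
  then have scale: "filterlim (\<lambda>L. L / a) at_top at_top"
    unfolding divide_inverse .
  have "((\<lambda>L. ennreal b * (ennreal e * S (L / a) + T (L / a))) \<longlongrightarrow> ennreal b * (ennreal e * 0 + 0)) at_top"
    using filterlim_compose[OF S scale] filterlim_compose[OF T scale]
    by (intro ennreal_tendsto_cmult tendsto_add) auto
  then show ?thesis by simp
qed

section \<open>Cells keep positive mass\<close>

lemma S_class_prob_space: "\<pi> \<in> S_class C C1 \<Longrightarrow> prob_space \<pi>"
  and sets_S_class: "\<pi> \<in> S_class C C1 \<Longrightarrow> sets \<pi> = sets borel"
  by (auto simp: S_class_def)

lemma S_class_lipschitz_density:
  fixes \<pi> :: "'a::euclidean_space measure"
  assumes "\<pi> \<in> S_class C C1"
  shows "\<exists>g :: 'a \<Rightarrow> real. g \<in> borel_measurable borel \<and> (\<forall>x. 0 \<le> g x)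
           \<and> C1-lipschitz_on UNIV g \<and> \<pi> = density lborel (\<lambda>x. ennreal (g x))"
  using assms unfolding S_class_def by blast

lemma Qc_class_measurable: "Q \<in> Qc_class M \<Longrightarrow> Q \<in> borel \<rightarrow>\<^sub>M count_space UNIV"
  by (simp add: Qc_class_def)

lemma vimage_singleton_in_sets_borel:
  "R \<in> borel \<rightarrow>\<^sub>M count_space UNIV \<Longrightarrow> R -` {m} \<in> sets borel"
  using measurable_sets[of R borel "count_space UNIV" "{m}"] by simp

definition tent :: "'a::metric_space \<Rightarrow> real \<Rightarrow> 'a \<Rightarrow> real" where
  "tent c \<rho> z = max 0 (\<rho> - dist z c)"

lemma continuous_on_tent: "continuous_on UNIV (tent c \<rho>)"
  unfolding tent_def[abs_def] by (intro continuous_intros)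

lemma borel_measurable_tent[measurable]: "tent c \<rho> \<in> borel_measurable borel"
  by (rule borel_measurable_continuous_onI[OF continuous_on_tent])

lemma tent_nonneg: "0 \<le> tent c \<rho> z"
  and tent_le: "0 \<le> \<rho> \<Longrightarrow> tent c \<rho> z \<le> \<rho>"
  and tent_eq_0: "z \<notin> ball c \<rho> \<Longrightarrow> tent c \<rho> z = 0"
  and tent_pos: "z \<in> ball c \<rho> \<Longrightarrow> 0 < tent c \<rho> z"
  by (auto simp: tent_def dist_commute)

lemma bounded_range_tent: "0 \<le> \<rho> \<Longrightarrow> bounded (range (tent c \<rho>))"
  by (intro boundedI[of _ \<rho>]) (auto simp: tent_nonneg tent_le)

lemma integrable_tent: "integrable lborel (tent (c::'a::euclidean_space) \<rho>)"
proof (cases "0 \<le> \<rho>")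
  case True
  have "(\<integral>\<^sup>+ z. tent c \<rho> z \<partial>lborel) \<le> (\<integral>\<^sup>+ z. ennreal \<rho> * indicator (ball c \<rho>) z \<partial>lborel)"
    using True by (intro nn_integral_mono) (auto simp: indicator_def tent_eq_0 tent_le)
  also have "\<dots> < \<infinity>"
    using emeasure_lborel_ball_finite[of c \<rho>]
    by (subst nn_integral_cmult_indicator) (auto simp: ennreal_mult_less_top)
  finally show ?thesis
    by (intro integrableI_bounded) (auto simp: tent_nonneg)
next
  case False
  then have "tent c \<rho> = (\<lambda>_. 0)"
    unfolding fun_eq_iff tent_def by (smt (verit) zero_le_dist)
  then show ?thesis by simp
qed

lemma integral_tent_pos:
  assumes "0 < \<rho>"
  shows "0 < (\<integral>z. tent (c::'a::euclidean_space) \<rho> z \<partial>lborel)"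
proof -
  have "0 < \<rho> / 2 * measure lborel (ball c (\<rho> / 2))"
    using assms content_ball_pos[of "\<rho> / 2" c] by simp
  also have "\<dots> = (\<integral>z. \<rho> / 2 * indicator (ball c (\<rho> / 2)) z \<partial>lborel)"
    using emeasure_lborel_ball_finite[of c "\<rho> / 2"] by simp
  also have "\<dots> \<le> (\<integral>z. tent c \<rho> z \<partial>lborel)"
    using emeasure_lborel_ball_finite[of c "\<rho> / 2"] assms
    by (intro integral_mono integrable_tent integrable_mult_right integrable_real_indicator)
       (auto simp: indicator_def tent_def dist_commute)
  finally show ?thesis .
qed

lemma lipschitz_on_ball_oscillation:
  assumes "C1-lipschitz_on UNIV g" "y \<in> ball c \<rho>" "z \<in> ball c \<rho>"
  shows "\<bar>g z - g y\<bar> \<le> 2 * C1 * \<rho>"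
proof -
  have "dist z y \<le> 2 * \<rho>"
    using dist_triangle[of z y c] assms(2,3) by (simp add: dist_commute)
  then have "C1 * dist z y \<le> C1 * (2 * \<rho>)"
    using lipschitz_on_nonneg[OF assms(1)] by (rule mult_left_mono)
  then show ?thesis
    using lipschitz_onD[OF assms(1), of z y] by (simp add: dist_real_def)
qed

lemma integral_density_tent_bounds:
  fixes g :: "'a::euclidean_space \<Rightarrow> real"
  assumes [measurable]: "g \<in> borel_measurable borel" and g_nonneg: "\<And>x. 0 \<le> g x"
    and prob: "prob_space (density lborel (\<lambda>x. ennreal (g x)))" and \<rho>: "0 \<le> \<rho>"
  shows integral_density_tent_ge: "(\<And>z. z \<in> ball c \<rho> \<Longrightarrow> a \<le> g z) \<Longrightarrow>
           a * (\<integral>z. tent c \<rho> z \<partial>lborel)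
             \<le> (\<integral>z. tent c \<rho> z \<partial>density lborel (\<lambda>x. ennreal (g x)))"
    and integral_density_tent_le: "(\<And>z. z \<in> ball c \<rho> \<Longrightarrow> g z \<le> b) \<Longrightarrow>
           (\<integral>z. tent c \<rho> z \<partial>density lborel (\<lambda>x. ennreal (g x)))
             \<le> b * (\<integral>z. tent c \<rho> z \<partial>lborel)"
proof -
  interpret prob_space "density lborel (\<lambda>x. ennreal (g x))" by (rule prob)
  have "integrable (density lborel (\<lambda>x. ennreal (g x))) (tent c \<rho>)"
    using \<rho> by (intro integrable_const_bound[where B = \<rho>]) (auto simp: tent_nonneg tent_le)
  then have int: "integrable lborel (\<lambda>z. g z * tent c \<rho> z)"
    by (subst (asm) integrable_density) (auto simp: g_nonneg)
  have eq: "(\<integral>z. tent c \<rho> z \<partial>density lborel (\<lambda>x. ennreal (g x)))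
      = (\<integral>z. g z * tent c \<rho> z \<partial>lborel)"
    by (subst integral_density) (auto simp: g_nonneg)
  show "a * (\<integral>z. tent c \<rho> z \<partial>lborel)
      \<le> (\<integral>z. tent c \<rho> z \<partial>density lborel (\<lambda>x. ennreal (g x)))"
    if "\<And>z. z \<in> ball c \<rho> \<Longrightarrow> a \<le> g z"
    unfolding eq integral_mult_right_zero[symmetric] using that
    by (intro integral_mono int integrable_mult_right integrable_tent)
       (metis mult_right_mono mult_zero_right order_refl tent_eq_0 tent_nonneg)
  show "(\<integral>z. tent c \<rho> z \<partial>density lborel (\<lambda>x. ennreal (g x)))
      \<le> b * (\<integral>z. tent c \<rho> z \<partial>lborel)"
    if "\<And>z. z \<in> ball c \<rho> \<Longrightarrow> g z \<le> b"
    unfolding eq integral_mult_right_zero[symmetric] using that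
    by (intro integral_mono int integrable_mult_right integrable_tent)
       (metis mult_right_mono mult_zero_right order_refl tent_eq_0 tent_nonneg)
qed

lemma nonnull_superlevel_in_cball:
  fixes g :: "'a::euclidean_space \<Rightarrow> real"
  assumes [measurable]: "g \<in> borel_measurable borel" "A \<in> sets borel"
    and nonnull: "emeasure (density lborel (\<lambda>x. ennreal (g x))) A \<noteq> 0"
  shows "\<exists>\<delta>>0. \<exists>R. emeasure lborel (A \<inter> {x. \<delta> < g x} \<inter> cball 0 R) \<noteq> 0"
proof (rule ccontr)
  define E where "E k = A \<inter> {x. 1 / (real k + 1) < g x} \<inter> cball 0 (real k)" for k :: nat
  assume "\<not> ?thesis"
  then have "E k \<in> null_sets lborel" for k
    by (auto simp: E_def null_sets_def)
  then have "(\<Union>k. E k) \<in> null_sets lborel" by blast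
  then have "AE x in lborel. ennreal (g x) * indicator A x = 0"
  proof (rule AE_I')
    show "{x \<in> space lborel. ennreal (g x) * indicator A x \<noteq> 0} \<subseteq> (\<Union>k. E k)"
    proof clarify
      fix x assume "ennreal (g x) * indicator A x \<noteq> 0"
      then have "x \<in> A" "0 < g x"
        using ennreal_neg[of "g x"] by (auto simp: indicator_def not_less[symmetric] split: if_splits)
      obtain k :: nat where k: "max (norm x) (1 / g x) < real k"
        using reals_Archimedean2 by blast
      have "1 / (real k + 1) < g x"
        using k \<open>0 < g x\<close> by (simp add: field_simps)
      with k \<open>x \<in> A\<close> have "x \<in> E k" by (simp add: E_def)
      then show "x \<in> (\<Union>k. E k)" by blast
    qed
  qed
  then have "emeasure (density lborel (\<lambda>x. ennreal (g x))) A = 0"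
    by (simp add: emeasure_density nn_integral_0_iff_AE)
  with nonnull show False by blast
qed

lemma nonnull_bounded_set_meets_ball:
  fixes E :: "'a::euclidean_space set"
  assumes "E \<in> sets borel" "bounded E" "emeasure lborel E \<noteq> 0" "0 < \<rho>"
  shows "\<exists>c. emeasure lborel (E \<inter> ball c \<rho>) \<noteq> 0"
proof (rule ccontr)
  assume null: "\<not> ?thesis"
  obtain x\<^sub>0 R where R: "E \<subseteq> cball x\<^sub>0 R" using \<open>bounded E\<close> bounded_subset_cball by blast
  have cover: "cball x\<^sub>0 R \<subseteq> (\<Union>c\<in>cball x\<^sub>0 R. ball c \<rho>)"
  proof
    fix x assume "x \<in> cball x\<^sub>0 R"
    then show "x \<in> (\<Union>c\<in>cball x\<^sub>0 R. ball c \<rho>)" using \<open>0 < \<rho>\<close> by (intro UN_I[of x]) auto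
  qed
  obtain D where D: "finite D" "cball x\<^sub>0 R \<subseteq> (\<Union>c\<in>D. ball c \<rho>)"
    by (rule compactE_image[OF compact_cball _ cover]) auto
  have "(\<Union>c\<in>D. E \<inter> ball c \<rho>) \<in> null_sets lborel"
    using null \<open>finite D\<close> \<open>E \<in> sets borel\<close>
    by (intro null_sets_UN') (auto simp: null_sets_def countable_finite)
  moreover have "E = (\<Union>c\<in>D. E \<inter> ball c \<rho>)" using R D(2) by auto
  ultimately show False using assms(3) by (simp add: null_sets_def)
qed

lemma lipschitz_density_ge_on_ball:
  fixes g :: "'a::euclidean_space \<Rightarrow> real"
  assumes [measurable]: "g \<in> borel_measurable borel" "A \<in> sets borel"
    and lip: "C1-lipschitz_on UNIV g"
    and nonnull: "emeasure (density lborel (\<lambda>x. ennreal (g x))) A \<noteq> 0"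
  shows "\<exists>\<delta> c \<rho>. 0 < \<delta> \<and> 0 < \<rho> \<and> 2 * C1 * \<rho> \<le> \<delta> \<and> (\<forall>z\<in>ball c \<rho>. 3 * \<delta> \<le> g z)
                 \<and> emeasure lborel (A \<inter> ball c \<rho>) \<noteq> 0"
proof -
  have C1: "0 \<le> C1" using lip by (rule lipschitz_on_nonneg)
  obtain \<delta>' R where \<delta>': "0 < \<delta>'" and E: "emeasure lborel (A \<inter> {x. \<delta>' < g x} \<inter> cball 0 R) \<noteq> 0"
    using nonnull_superlevel_in_cball[OF assms(1,2) nonnull] by blast
  define \<delta> \<rho> where "\<delta> = \<delta>' / 4" and "\<rho> = \<delta> / (2 * (C1 + 1))"
  have \<delta>: "0 < \<delta>" and \<rho>: "0 < \<rho>" using \<delta>' C1 by (simp_all add: \<delta>_def \<rho>_def)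
  have \<rho>C1: "2 * C1 * \<rho> \<le> \<delta>"
    using \<delta> C1 by (simp add: \<rho>_def field_simps)
  obtain c where c: "emeasure lborel ((A \<inter> {x. \<delta>' < g x} \<inter> cball 0 R) \<inter> ball c \<rho>) \<noteq> 0"
    using nonnull_bounded_set_meets_ball[OF _ _ E \<rho>] by (auto simp: bounded_Int)
  then obtain y where y: "y \<in> ball c \<rho>" "\<delta>' < g y"
    by (metis Int_iff emeasure_empty equals0I mem_Collect_eq)
  have "3 * \<delta> \<le> g z" if "z \<in> ball c \<rho>" for z
    using lipschitz_on_ball_oscillation[OF lip y(1) that] \<rho>C1 y(2) \<delta>_def by linarith
  moreover have "emeasure lborel (A \<inter> ball c \<rho>) \<noteq> 0"
  proof -
    have "emeasure lborel (A \<inter> {x. \<delta>' < g x} \<inter> cball 0 R \<inter> ball c \<rho>) \<le> emeasure lborel (A \<inter> ball c \<rho>)"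
      by (intro emeasure_mono) auto
    with c show ?thesis by (auto simp: le_zero_eq)
  qed
  ultimately show ?thesis using \<delta> \<rho> \<rho>C1 by blast
qed

lemma weak_conv_lipschitz_densities_ge_on_ball:
  fixes gs :: "nat \<Rightarrow> 'a::euclidean_space \<Rightarrow> real" and g :: "'a \<Rightarrow> real"
  assumes [measurable]: "\<And>n. gs n \<in> borel_measurable borel" "g \<in> borel_measurable borel"
    and nonneg: "\<And>n x. 0 \<le> gs n x" "\<And>x. 0 \<le> g x"
    and lip: "\<And>n. C1-lipschitz_on UNIV (gs n)"
    and prob: "\<And>n. prob_space (density lborel (\<lambda>x. ennreal (gs n x)))"
      "prob_space (density lborel (\<lambda>x. ennreal (g x)))"
    and conv: "weak_conv_to (\<lambda>n. density lborel (\<lambda>x. ennreal (gs n x))) (density lborel (\<lambda>x. ennreal (g x)))"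
    and \<delta>: "0 < \<delta>" and \<rho>: "0 < \<rho>" and \<rho>C1: "2 * C1 * \<rho> \<le> \<delta>" and g_ge: "\<And>z. z \<in> ball c \<rho> \<Longrightarrow> 3 * \<delta> \<le> g z"
  shows "\<forall>\<^sub>F n in sequentially. \<forall>z\<in>ball c \<rho>. \<delta> \<le> gs n z"
proof -
  define J where "J = (\<integral>z. tent c \<rho> z \<partial>lborel)"
  define I where "I u = (\<integral>z. tent c \<rho> z \<partial>density lborel (\<lambda>x. ennreal (u x)))" for u :: "'a \<Rightarrow> real"
  have J: "0 < J" unfolding J_def using \<rho> by (rule integral_tent_pos)
  have "(\<lambda>n. I (gs n)) \<longlonglongrightarrow> I g"
    using conv \<rho> continuous_on_tent[of c \<rho>] bounded_range_tent[of \<rho> c]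
    unfolding weak_conv_to_def I_def by simp
  then have "\<forall>\<^sub>F n in sequentially. I g - \<delta> * J < I (gs n)"
    using \<delta> J by (intro order_tendstoD(1)) auto
  then show ?thesis
  proof eventually_elim
    case (elim n)
    show ?case
    proof (rule ccontr)
      assume "\<not> (\<forall>z\<in>ball c \<rho>. \<delta> \<le> gs n z)"
      then obtain y where y: "y \<in> ball c \<rho>" "gs n y < \<delta>" by auto
      have "gs n z \<le> 2 * \<delta>" if "z \<in> ball c \<rho>" for z
        using lipschitz_on_ball_oscillation[OF lip[of n] y(1) that] \<rho>C1 y(2) by linarith
      then have "I (gs n) \<le> 2 * \<delta> * J"
        unfolding I_def J_def using \<rho> by (intro integral_density_tent_le nonneg prob) auto
      moreover have "3 * \<delta> * J \<le> I g"
        unfolding I_def J_def using \<rho> g_ge by (intro integral_density_tent_ge nonneg prob) auto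
      ultimately show False using elim J by (simp add: algebra_simps)
    qed
  qed
qed

lemma measure_density_le_superlevel:
  fixes p :: "'a \<Rightarrow> real"
  assumes prob: "prob_space (density M (\<lambda>x. ennreal (p x)))"
    and [measurable]: "p \<in> borel_measurable M" "B \<in> sets M"
    and B: "emeasure M B < \<infinity>" and T: "0 \<le> T"
  shows "measure (density M (\<lambda>x. ennreal (p x))) B
           \<le> measure (density M (\<lambda>x. ennreal (p x))) {x \<in> space M. T < p x} + T * measure M B"
proof -
  interpret prob_space "density M (\<lambda>x. ennreal (p x))" by (rule prob)
  have "(\<integral>\<^sup>+ x. ennreal (p x) * indicator B x \<partial>M)
      \<le> (\<integral>\<^sup>+ x. ennreal (p x) * indicator {x \<in> space M. T < p x} x + ennreal T * indicator B x \<partial>M)"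
  proof (intro nn_integral_mono)
    fix x assume "x \<in> space M"
    then show "ennreal (p x) * indicator B x
               \<le> ennreal (p x) * indicator {x \<in> space M. T < p x} x + ennreal T * indicator B x"
      by (cases "T < p x") (auto simp: indicator_def intro: ennreal_leI)
  qed
  then have "emeasure (density M (\<lambda>x. ennreal (p x))) B
      \<le> emeasure (density M (\<lambda>x. ennreal (p x))) {x \<in> space M. T < p x} + ennreal T * emeasure M B"
    by (simp add: emeasure_density nn_integral_add nn_integral_cmult_indicator)
  then show ?thesis
    using B T by (simp add: emeasure_eq_measure emeasure_eq_ennreal_measure[of M B]
        ennreal_mult[symmetric] ennreal_plus[symmetric] del: ennreal_plus)
qed

lemma (in finite_measure) emeasure_superlevel_less:
  fixes p :: "'a \<Rightarrow> real" and e :: ennreal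
  assumes [measurable]: "p \<in> borel_measurable M" and e: "0 < e"
  shows "\<exists>T>0. emeasure M {x \<in> space M. T < p x} < e"
proof -
  define S where "S k = {x \<in> space M. real k < p x}" for k :: nat
  have S_sets: "S k \<in> sets M" for k unfolding S_def by measurable
  have "(INF k. emeasure M (S k)) = emeasure M (\<Inter>k. S k)"
    by (intro INF_emeasure_decseq) (auto simp: S_sets S_def decseq_def)
  also have "(\<Inter>k. S k) = {}"
  proof -
    have "x \<notin> S (nat \<lceil>p x\<rceil>)" for x
      using real_nat_ceiling_ge[of "p x"] by (simp add: S_def)
    then show ?thesis by blast
  qed
  finally have "(INF k. emeasure M (S k)) < e" using e by simp
  then obtain k where "emeasure M (S k) < e" by (auto simp: INF_less_iff)
  moreover have "emeasure M (S (Suc k)) \<le> emeasure M (S k)"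
    by (intro emeasure_mono S_sets) (auto simp: S_def)
  ultimately have "emeasure M (S (Suc k)) < e" by simp
  then show ?thesis by (intro exI[of _ "real (Suc k)"]) (simp add: S_def)
qed

lemma integral_joint_meas:
  fixes G :: "'a::euclidean_space \<times> nat \<Rightarrow> real"
  assumes P: "sets P = sets borel" and R: "R \<in> borel \<rightarrow>\<^sub>M count_space UNIV"
    and G: "G \<in> borel_measurable borel"
  shows "(\<integral>z. G z \<partial>joint_meas P R) = (\<integral>x. G (x, R x) \<partial>P)"
proof -
  have "R \<in> borel \<rightarrow>\<^sub>M borel"
    using R measurable_cong_sets[OF refl sets_borel_eq_count_space] by blast
  then have "(\<lambda>x. (x, R x)) \<in> borel \<rightarrow>\<^sub>M (borel :: ('a \<times> nat) measure)"
    unfolding borel_prod[symmetric] by measurable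
  then have "(\<lambda>x. (x, R x)) \<in> P \<rightarrow>\<^sub>M borel"
    using measurable_cong_sets[OF P refl] by blast
  then show ?thesis
    unfolding joint_meas_def by (rule integral_distr[OF _ G])
qed

lemma integral_tent_indicator_le:
  assumes "prob_space M" "sets M = sets borel" "A \<in> sets borel" "0 \<le> \<rho>"
  shows "(\<integral>x. tent c \<rho> x * indicator A x \<partial>M) \<le> \<rho> * measure M (A \<inter> ball c \<rho>)"
proof -
  interpret prob_space M by (rule assms(1))
  have [measurable]: "A \<in> sets M" "ball c \<rho> \<in> sets M" using assms(2,3) by auto
  have [measurable]: "tent c \<rho> \<in> borel_measurable M"
    by (subst measurable_cong_sets[OF assms(2) refl]) simp
  have meas: "(\<lambda>x. tent c \<rho> x * indicator A x) \<in> borel_measurable M"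
      "(\<lambda>x. \<rho> * indicator (A \<inter> ball c \<rho>) x) \<in> borel_measurable M"
    by measurable
  have "(\<integral>x. tent c \<rho> x * indicator A x \<partial>M) \<le> (\<integral>x. \<rho> * indicator (A \<inter> ball c \<rho>) x \<partial>M)"
    using assms(4)
    by (intro integral_mono integrable_const_bound[where B = \<rho>] meas)
       (auto simp: indicator_def tent_nonneg tent_le tent_eq_0)
  then show ?thesis by simp
qed

lemma integral_tent_indicator_pos:
  fixes p :: "'a::euclidean_space \<Rightarrow> real"
  assumes [measurable]: "p \<in> borel_measurable borel" "A \<in> sets borel"
    and p_pos: "\<And>x. 0 < p x" and prob: "prob_space (density lborel (\<lambda>x. ennreal (p x)))"
    and nonnull: "emeasure lborel (A \<inter> ball c \<rho>) \<noteq> 0"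
  shows "0 < (\<integral>x. tent c \<rho> x * indicator A x \<partial>density lborel (\<lambda>x. ennreal (p x)))"
proof -
  interpret prob_space "density lborel (\<lambda>x. ennreal (p x))" by (rule prob)
  have "0 < \<rho>"
  proof (rule ccontr)
    assume "\<not> 0 < \<rho>"
    then have "ball c \<rho> = {}" by simp
    with nonnull show False by simp
  qed
  then have int: "integrable (density lborel (\<lambda>x. ennreal (p x))) (\<lambda>x. tent c \<rho> x * indicator A x)"
    by (intro integrable_const_bound[where B = \<rho>]) (auto simp: indicator_def tent_nonneg tent_le)
  have "(\<integral>x. tent c \<rho> x * indicator A x \<partial>density lborel (\<lambda>x. ennreal (p x))) \<noteq> 0"
  proof
    assume "(\<integral>x. tent c \<rho> x * indicator A x \<partial>density lborel (\<lambda>x. ennreal (p x))) = 0"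
    then have "AE x in density lborel (\<lambda>x. ennreal (p x)). tent c \<rho> x * indicator A x = 0"
      using int by (subst (asm) integral_nonneg_eq_0_iff_AE) (auto simp: tent_nonneg)
    then have "AE x in lborel. tent c \<rho> x * indicator A x = 0"
      by (simp add: AE_density p_pos)
    then have "AE x in lborel. x \<notin> A \<inter> ball c \<rho>"
    proof eventually_elim
      case (elim x)
      then show ?case using tent_pos[of x c \<rho>] by (auto simp: indicator_def)
    qed
    then have "A \<inter> ball c \<rho> \<in> null_sets lborel"
      by (subst AE_iff_null_sets) auto
    with nonnull show False by auto
  qed
  moreover have "0 \<le> (\<integral>x. tent c \<rho> x * indicator A x \<partial>density lborel (\<lambda>x. ennreal (p x)))"
    by (simp add: tent_nonneg)
  ultimately show ?thesis by linarith
qed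

lemma Qc_conv_tendsto_integral_tent_cell:
  fixes Qs :: "nat \<Rightarrow> 'a::euclidean_space \<Rightarrow> nat" and Q :: "'a \<Rightarrow> nat"
  assumes P: "sets P = sets borel"
    and Qs: "\<And>n. Qs n \<in> borel \<rightarrow>\<^sub>M count_space UNIV" and Q: "Q \<in> borel \<rightarrow>\<^sub>M count_space UNIV"
    and conv: "Qc_conv P Qs Q" and \<rho>: "0 \<le> \<rho>"
  shows "(\<lambda>n. \<integral>x. tent c \<rho> x * indicator (Qs n -` {m}) x \<partial>P)
           \<longlonglongrightarrow> (\<integral>x. tent c \<rho> x * indicator (Q -` {m}) x \<partial>P)"
proof -
  define G where "G z = tent c \<rho> (fst z) * (if snd z = m then 1 else 0)" for z :: "'a \<times> nat"
  have "continuous_on UNIV (\<lambda>i::nat. if i = m then 1 else 0 :: real)" by simp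
  then have G_cont: "continuous_on UNIV G"
    unfolding G_def
    by (intro continuous_on_mult continuous_on_compose2[OF continuous_on_tent continuous_on_fst]
        continuous_on_compose2[OF _ continuous_on_snd] continuous_on_id) auto
  moreover have "bounded (range G)"
    using \<rho> by (intro boundedI[of _ \<rho>]) (auto simp: G_def tent_nonneg tent_le)
  ultimately have "(\<lambda>n. \<integral>z. G z \<partial>joint_meas P (Qs n)) \<longlonglongrightarrow> (\<integral>z. G z \<partial>joint_meas P Q)"
    using conv unfolding Qc_conv_def weak_conv_to_def by blast
  moreover have "(\<integral>z. G z \<partial>joint_meas P R) = (\<integral>x. tent c \<rho> x * indicator (R -` {m}) x \<partial>P)"
    if "R \<in> borel \<rightarrow>\<^sub>M count_space UNIV" for R
    by (subst integral_joint_meas[OF P that])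
       (auto simp: G_def indicator_def of_bool_def intro!: borel_measurable_continuous_onI G_cont)
  ultimately show ?thesis using Qs Q by simp
qed

lemma Qc_conv_cell_ball_measure_ge:
  fixes p :: "'a::euclidean_space \<Rightarrow> real" and Qs :: "nat \<Rightarrow> 'a \<Rightarrow> nat" and Q :: "'a \<Rightarrow> nat"
  assumes P: "prob_space P" "P = density lborel (\<lambda>x. ennreal (p x))"
    and [measurable]: "p \<in> borel_measurable borel" and p_pos: "\<And>x. 0 < p x"
    and Qs: "\<And>n. Qs n \<in> borel \<rightarrow>\<^sub>M count_space UNIV" and Q: "Q \<in> borel \<rightarrow>\<^sub>M count_space UNIV"
    and conv: "Qc_conv P Qs Q" and \<rho>: "0 < \<rho>"
    and nonnull: "emeasure lborel (Q -` {m} \<inter> ball c \<rho>) \<noteq> 0"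
  shows "\<exists>\<eta>>0. \<forall>\<^sub>F n in sequentially. \<eta> \<le> measure lborel (Qs n -` {m} \<inter> ball c \<rho>)"
proof -
  interpret P: prob_space P by (rule P(1))
  have P_sets: "sets P = sets borel" using P(2) by simp
  define v where "v R = (\<integral>x. tent c \<rho> x * indicator (R -` {m}) x \<partial>P)" for R :: "'a \<Rightarrow> nat"
  have "(\<lambda>n. v (Qs n)) \<longlonglongrightarrow> v Q"
    unfolding v_def using P_sets Qs Q conv less_imp_le[OF \<rho>]
    by (rule Qc_conv_tendsto_integral_tent_cell)
  moreover have vQ: "0 < v Q"
    unfolding v_def P(2) using P nonnull
    by (intro integral_tent_indicator_pos vimage_singleton_in_sets_borel Q p_pos) auto
  ultimately have ev: "\<forall>\<^sub>F n in sequentially. v Q / 2 < v (Qs n)"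
    by (intro order_tendstoD(1)) auto
  \<comment> \<open>Truncating p at a level T turns P-mass near c into Lebesgue measure.\<close>
  obtain T where T: "0 < T" and small: "emeasure P {x. T < p x} < ennreal (v Q / (4 * \<rho>))"
    using P.emeasure_superlevel_less[of p "ennreal (v Q / (4 * \<rho>))"] vQ \<rho>
    by (auto simp: P(2) measurable_cong_sets[OF P_sets[unfolded P(2)] refl])
  have small': "measure P {x. T < p x} < v Q / (4 * \<rho>)"
    using small vQ \<rho> by (simp add: P.emeasure_eq_measure ennreal_less_iff)
  have "\<forall>\<^sub>F n in sequentially. v Q / (4 * \<rho> * T) \<le> measure lborel (Qs n -` {m} \<inter> ball c \<rho>)"
    using ev
  proof eventually_elim
    case (elim n)
    define B where "B = Qs n -` {m} \<inter> ball c \<rho>"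
    have B: "B \<in> sets borel" "emeasure lborel B < \<infinity>"
      using vimage_singleton_in_sets_borel[OF Qs] emeasure_mono[of B "ball c \<rho>" lborel]
        emeasure_lborel_ball_finite[of c \<rho>]
      by (auto simp: B_def)
    have "v (Qs n) \<le> \<rho> * measure P B"
      unfolding v_def B_def
      by (rule integral_tent_indicator_le[OF P(1) P_sets vimage_singleton_in_sets_borel[OF Qs]
            less_imp_le[OF \<rho>]])
    with elim have "v Q / 2 < \<rho> * measure P B" by linarith
    also have "\<dots> \<le> \<rho> * (measure P {x. T < p x} + T * measure lborel B)"
      using measure_density_le_superlevel[of lborel p B T] P B T \<rho> by simp
    finally show ?case
      using small' \<rho> T by (simp add: B_def field_simps)
  qed
  then show ?thesis using vQ \<rho> T by (intro exI[of _ "v Q / (4 * \<rho> * T)"]) auto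
qed

lemma measure_density_ge_on_ball:
  fixes g :: "'a::euclidean_space \<Rightarrow> real"
  assumes prob: "prob_space (density lborel (\<lambda>x. ennreal (g x)))"
    and [measurable]: "g \<in> borel_measurable borel" "A \<in> sets borel"
    and ge: "\<forall>z\<in>ball c \<rho>. \<delta> \<le> g z" and \<delta>: "0 \<le> \<delta>"
  shows "\<delta> * measure lborel (A \<inter> ball c \<rho>) \<le> measure (density lborel (\<lambda>x. ennreal (g x))) A"
proof -
  interpret prob_space "density lborel (\<lambda>x. ennreal (g x))" by (rule prob)
  have "emeasure lborel (A \<inter> ball c \<rho>) = ennreal (measure lborel (A \<inter> ball c \<rho>))"
    using emeasure_mono[of "A \<inter> ball c \<rho>" "ball c \<rho>" lborel] emeasure_lborel_ball_finite[of c \<rho>]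
    by (intro emeasure_eq_ennreal_measure) (auto simp: top_unique)
  then have "ennreal (\<delta> * measure lborel (A \<inter> ball c \<rho>))
      = (\<integral>\<^sup>+ x. ennreal \<delta> * indicator (A \<inter> ball c \<rho>) x \<partial>lborel)"
    using \<delta> by (simp add: nn_integral_cmult_indicator ennreal_mult)
  also have "\<dots> \<le> (\<integral>\<^sup>+ x. ennreal (g x) * indicator A x \<partial>lborel)"
    using ge by (intro nn_integral_mono) (auto simp: indicator_def intro!: ennreal_leI)
  also have "\<dots> = emeasure (density lborel (\<lambda>x. ennreal (g x))) A"
    by (simp add: emeasure_density)
  finally show ?thesis by (simp add: emeasure_eq_measure ennreal_le_iff)
qed

lemma S_class_cell_measure_eventually_ge:
  fixes p :: "'a::euclidean_space \<Rightarrow> real"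
  assumes P: "prob_space P" "P = density lborel (\<lambda>x. ennreal (p x))"
      "p \<in> borel_measurable borel" "\<And>x. 0 < p x"
    and \<pi>s: "\<And>n. \<pi>s n \<in> S_class C C1" and \<pi>: "\<pi> \<in> S_class C C1"
    and Qs: "\<And>n. Qs n \<in> Qc_class M" and Q: "Q \<in> Qc_class M"
    and \<pi>_conv: "weak_conv_to \<pi>s \<pi>" and Q_conv: "Qc_conv P Qs Q"
    and pos: "0 < measure \<pi> (Q -` {m})"
  shows "\<exists>c>0. \<forall>\<^sub>F n in sequentially. c \<le> measure (\<pi>s n) (Qs n -` {m})"
proof -
  obtain g :: "'a \<Rightarrow> real" where g_meas[measurable]: "g \<in> borel_measurable borel"
      and g: "\<And>x. 0 \<le> g x" "C1-lipschitz_on UNIV g" "\<pi> = density lborel (\<lambda>x. ennreal (g x))"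
    using S_class_lipschitz_density[OF \<pi>] by blast
  obtain gs :: "nat \<Rightarrow> 'a \<Rightarrow> real" where [measurable]: "\<And>n. gs n \<in> borel_measurable borel"
      and gs: "\<And>n x. 0 \<le> gs n x" "\<And>n. C1-lipschitz_on UNIV (gs n)"
        "\<And>n. \<pi>s n = density lborel (\<lambda>x. ennreal (gs n x))"
    using S_class_lipschitz_density[OF \<pi>s] by metis
  have Qs_meas: "Qs n \<in> borel \<rightarrow>\<^sub>M count_space UNIV" "Q \<in> borel \<rightarrow>\<^sub>M count_space UNIV" for n
    using Qs Q by (auto intro: Qc_class_measurable)
  note cells[measurable] = vimage_singleton_in_sets_borel[OF Qs_meas(2)]
    vimage_singleton_in_sets_borel[OF Qs_meas(1)]
  have "emeasure (density lborel (\<lambda>x. ennreal (g x))) (Q -` {m}) \<noteq> 0"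
    using pos g(3) by (auto simp: measure_def)
  then obtain \<delta> c \<rho> where \<delta>: "0 < \<delta>" and \<rho>: "0 < \<rho>" "2 * C1 * \<rho> \<le> \<delta>"
      and g_ge: "\<forall>z\<in>ball c \<rho>. 3 * \<delta> \<le> g z" and nonnull: "emeasure lborel (Q -` {m} \<inter> ball c \<rho>) \<noteq> 0"
    using lipschitz_density_ge_on_ball[OF g_meas cells(1) g(2)] by blast
  have dens_ge: "\<forall>\<^sub>F n in sequentially. \<forall>z\<in>ball c \<rho>. \<delta> \<le> gs n z"
    using \<pi>_conv \<pi>s \<pi> g_ge unfolding gs(3) g(3)
    by (intro weak_conv_lipschitz_densities_ge_on_ball[OF _ _ gs(1) g(1) gs(2) _ _ _ \<delta> \<rho>])
       (auto simp: gs(3)[symmetric] g(3)[symmetric] intro: S_class_prob_space)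
  obtain \<eta> where \<eta>: "0 < \<eta>"
    and cell_ge: "\<forall>\<^sub>F n in sequentially. \<eta> \<le> measure lborel (Qs n -` {m} \<inter> ball c \<rho>)"
    using Qc_conv_cell_ball_measure_ge[OF P Qs_meas Q_conv \<rho>(1) nonnull] by blast
  have "\<forall>\<^sub>F n in sequentially. \<delta> * \<eta> \<le> measure (\<pi>s n) (Qs n -` {m})"
    using dens_ge cell_ge
  proof eventually_elim
    case (elim n)
    have "\<delta> * \<eta> \<le> \<delta> * measure lborel (Qs n -` {m} \<inter> ball c \<rho>)"
      using elim(2) \<delta> by simp
    also have "\<dots> \<le> measure (\<pi>s n) (Qs n -` {m})"
      using elim(1) \<pi>s[of n] \<delta> unfolding gs(3)
      by (intro measure_density_ge_on_ball) (auto simp: gs(3)[symmetric] intro: S_class_prob_space)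
    finally show ?case .
  qed
  then show ?thesis using \<delta> \<eta> by (intro exI[of _ "\<delta> * \<eta>"]) auto
qed

lemma eventually_ge_imp_uniform_lower_bound:
  fixes a :: "nat \<Rightarrow> real"
  assumes "\<forall>\<^sub>F n in sequentially. c \<le> a n" and "0 < c"
  shows "\<exists>c'>0. \<forall>n. 0 < a n \<longrightarrow> c' \<le> a n"
proof -
  obtain N where N: "\<And>n. N \<le> n \<Longrightarrow> c \<le> a n"
    using assms(1) by (auto simp: eventually_sequentially)
  define c' where "c' = Min (insert c (a ` {n. n < N \<and> 0 < a n}))"
  have fin: "finite (insert c (a ` {n. n < N \<and> 0 < a n}))" by simp
  have "0 < c'"
    unfolding c'_def using fin \<open>0 < c\<close> by (subst Min_gr_iff) auto
  moreover have "c' \<le> a n" if "0 < a n" for n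
  proof (cases "n < N")
    case True
    then show ?thesis unfolding c'_def using fin that by (intro Min_le) auto
  next
    case False
    have "c' \<le> c" unfolding c'_def using fin by (intro Min_le) auto
    with N[of n] False show ?thesis by linarith
  qed
  ultimately show ?thesis by blast
qed

section \<open>The tails of the predicted measures\<close>

lemma tendsto_SUP_zero_if_dominated:
  fixes h :: "'i \<Rightarrow> real \<Rightarrow> ennreal"
  assumes "\<And>i L. i \<in> I \<Longrightarrow> h i L \<le> B L" and "(B \<longlongrightarrow> 0) at_top"
  shows "((\<lambda>L. SUP i \<in> I. h i L) \<longlongrightarrow> 0) at_top"
proof (rule tendsto_sandwich[OF _ _ tendsto_const assms(2)])
  show "\<forall>\<^sub>F L in at_top. (SUP i \<in> I. h i L) \<le> B L"
    using assms(1) by (intro always_eventually allI SUP_least) auto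
qed simp

lemma tail2_pihat_le:
  fixes f :: "'a::euclidean_space \<Rightarrow> 'a \<Rightarrow> 'a"
  assumes f_meas: "(\<lambda>(x, w). f x w) \<in> borel_measurable borel"
    and \<nu>: "prob_space \<nu>" "sets \<nu> = sets borel"
    and K: "K > 0" and growth: "\<And>x w. norm (f x w) \<le> K * (norm x + norm w)"
    and \<pi>: "prob_space \<pi>" "sets \<pi> = sets borel" and cell: "Q -` {m} \<in> sets borel"
    and c: "0 < c" "c \<le> measure \<pi> (Q -` {m})"
  shows "tail2 (pihat f \<nu> m \<pi> Q) L
           \<le> ennreal (4 * K\<^sup>2) * (ennreal (1 / c) * tail2 \<pi> (L / (4 * K\<^sup>2)) + tail2 \<nu> (L / (4 * K\<^sup>2)))"
proof -
  interpret prob_space \<pi> by (rule \<pi>(1))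
  have "prob_space (uniform_measure \<pi> (Q -` {m}))"
    using c cell \<pi>(2) by (intro prob_space_uniform_measure) (auto simp: emeasure_eq_measure)
  then have "tail2 (pihat f \<nu> m \<pi> Q) L \<le> ennreal (4 * K\<^sup>2)
      * (tail2 (uniform_measure \<pi> (Q -` {m})) (L / (4 * K\<^sup>2)) + tail2 \<nu> (L / (4 * K\<^sup>2)))"
    unfolding pihat_def using \<pi>(2) by (intro tail2_distr_prod_le f_meas \<nu> K growth) auto
  also have "\<dots> \<le> ennreal (4 * K\<^sup>2) * (ennreal (1 / c) * tail2 \<pi> (L / (4 * K\<^sup>2)) + tail2 \<nu> (L / (4 * K\<^sup>2)))"
    using \<pi> cell c by (intro mult_left_mono add_mono tail2_uniform_measure_le) auto
  finally show ?thesis .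
qed

theorem lemma9:
  fixes f :: "'a::euclidean_space \<Rightarrow> 'a \<Rightarrow> 'a"
    and \<nu> :: "'a measure"
    and \<phi> :: "'a \<Rightarrow> 'a \<Rightarrow> real"
    and C C1 K :: real
    and M m :: nat
    and P :: "'a measure" and p :: "'a \<Rightarrow> real"
    and \<pi>s :: "nat \<Rightarrow> 'a measure" and \<pi> :: "'a measure"
    and Qs :: "nat \<Rightarrow> 'a \<Rightarrow> nat" and Q :: "'a \<Rightarrow> nat"
  assumes f_meas: "(\<lambda>(x, w). f x w) \<in> borel_measurable borel"
    and nu_prob: "prob_space \<nu>" and nu_sets: "sets \<nu> = sets borel"
    and phi_meas: "\<And>x. \<phi> x \<in> borel_measurable borel"
    and phi_density: "\<And>x. distr \<nu> borel (f x) = density lborel (\<lambda>z. ennreal (\<phi> x z))"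
    and phi_pos: "\<And>x z. 0 < \<phi> x z"
    and phi_bdd: "\<And>x z. \<phi> x z \<le> C"
    and phi_lip: "\<And>x. C1-lipschitz_on UNIV (\<phi> x)"
    and growth: "K > 0" "\<And>x w. norm (f x w) \<le> K * (norm x + norm w)"
    and nu_moment: "(\<integral>\<^sup>+ z. ennreal (norm z ^ 2) \<partial>\<nu>) < \<infinity>"
    and P_prob: "prob_space P" and p_meas: "p \<in> borel_measurable borel"
    and p_pos: "\<And>x. 0 < p x" and P_dens: "P = density lborel (\<lambda>x. ennreal (p x))"
    and pis_S: "\<And>n. \<pi>s n \<in> S_class C C1" and pi_S: "\<pi> \<in> S_class C C1"
    and Qs_Qc: "\<And>n. Qs n \<in> Qc_class M" and Q_Qc: "Q \<in> Qc_class M"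
    and pi_conv: "weak_conv_to \<pi>s \<pi>"
    and Q_conv: "Qc_conv P Qs Q"
    and UI: "((\<lambda>L. SUP n. tail2 (\<pi>s n) L) \<longlongrightarrow> 0) at_top"
    and cell_pos: "0 < measure \<pi> (Q -` {m})"
  shows "(\<exists>N. \<forall>n\<ge>N. 0 < measure (\<pi>s n) (Qs n -` {m})) \<and>
         ((\<lambda>L. SUP n \<in> {n. 0 < measure (\<pi>s n) (Qs n -` {m})}. tail2 (pihat f \<nu> m (\<pi>s n) (Qs n)) L)
            \<longlongrightarrow> 0) at_top"
proof -
  obtain c where c: "0 < c" and ev: "\<forall>\<^sub>F n in sequentially. c \<le> measure (\<pi>s n) (Qs n -` {m})"
    using S_class_cell_measure_eventually_ge[OF P_prob P_dens p_meas p_pos pis_S pi_S Qs_Qc Q_Qc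
        pi_conv Q_conv cell_pos] by blast
  obtain c' where c': "0 < c'"
      "\<And>n. 0 < measure (\<pi>s n) (Qs n -` {m}) \<Longrightarrow> c' \<le> measure (\<pi>s n) (Qs n -` {m})"
    using eventually_ge_imp_uniform_lower_bound[OF ev c] by blast
  define bound where "bound = (\<lambda>L. ennreal (4 * K\<^sup>2)
      * (ennreal (1 / c') * (SUP n. tail2 (\<pi>s n) (L / (4 * K\<^sup>2))) + tail2 \<nu> (L / (4 * K\<^sup>2))))"
  have bound_lim: "(bound \<longlongrightarrow> 0) at_top"
    unfolding bound_def using UI tail2_tendsto_zero[OF nu_sets nu_moment] growth(1)
    by (intro tendsto_rescaled_tails_zero) auto
  have "tail2 (pihat f \<nu> m (\<pi>s n) (Qs n)) L \<le> bound L"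
    if n: "0 < measure (\<pi>s n) (Qs n -` {m})" for n L
  proof -
    have "tail2 (pihat f \<nu> m (\<pi>s n) (Qs n)) L \<le> ennreal (4 * K\<^sup>2)
        * (ennreal (1 / c') * tail2 (\<pi>s n) (L / (4 * K\<^sup>2)) + tail2 \<nu> (L / (4 * K\<^sup>2)))"
      using pis_S[of n] c'(1) c'(2)[OF n]
      by (intro tail2_pihat_le[OF f_meas nu_prob nu_sets growth]
          vimage_singleton_in_sets_borel[OF Qc_class_measurable[OF Qs_Qc]]
          S_class_prob_space sets_S_class)
    also have "\<dots> \<le> bound L"
      unfolding bound_def by (intro mult_left_mono add_mono SUP_upper) auto
    finally show ?thesis .
  qed
  then have "((\<lambda>L. SUP n \<in> {n. 0 < measure (\<pi>s n) (Qs n -` {m})}.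
      tail2 (pihat f \<nu> m (\<pi>s n) (Qs n)) L) \<longlongrightarrow> 0) at_top"
    using bound_lim by (intro tendsto_SUP_zero_if_dominated) auto
  moreover have "\<exists>N. \<forall>n\<ge>N. 0 < measure (\<pi>s n) (Qs n -` {m})"
    using ev c unfolding eventually_sequentially by (meson less_le_trans)
  ultimately show ?thesis by blast
qed

end
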